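(* Let $B\colon\mathbb{R}^n\times\mathbb{R}^n\to\mathbb{R}^n$ be a symmetric bilinear map. Then $\langle B(y,y),y\rangle_{\mathbb{R}^n}=0$ for all $y\in\mathbb{R}^n$ if and only if there exists a linear map $S\colon\mathbb{R}^n\to\mathfrak{so}(n)$ such that $B(y,y)=S(y)(y)$ for all $y\in\mathbb{R}^n$.
   Context: $\langle\cdot,\cdot\rangle_{\mathbb{R}^n}$ is the Euclidean inner product on $\mathbb{R}^n$, and $\mathfrak{so}(n)$ is the space of linear maps $q\colon\mathbb{R}^n\to\mathbb{R}^n$ that are skew-adjoint with respect to it. *)

theory Defs
  imports "HOL-Analysis.Analysis"
begin

definition so_n :: "(real^'n \<Rightarrow> real^'n) set" where
  "so_n = {q. linear q \<and> (\<forall>u v. inner (q u) v = - inner u (q v))}"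

end

theory Submission
  imports Defs
begin

text \<open>
  Polarizing the cubic form \<open>\<langle>B(y,y), y\<rangle>\<close> shows that it vanishes identically iff
  \<open>\<langle>B(y,y), w\<rangle> = -2\<langle>B(y,w), y\<rangle>\<close> for all \<open>y, w\<close>, i.e. iff \<open>B\<^sub>y\<^sup>* y = -B(y,y)/2\<close>
  for the operator \<open>B\<^sub>y = B(y,\<cdot>)\<close>. Hence the skew-adjoint part of \<open>B\<^sub>y\<close> sends \<open>y\<close> to
  \<open>3/4 B(y,y)\<close>, and \<open>S(y) = 4/3 (B\<^sub>y - B\<^sub>y\<^sup>*)/2\<close> is linear in \<open>y\<close>, skew-adjoint and satisfies
  \<open>S(y)(y) = B(y,y)\<close>. Conversely, \<open>\<langle>q y, y\<rangle> = 0\<close> for every skew-adjoint \<open>q\<close>.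
\<close>

lemma skew_adjoint_inner_self:
  fixes q :: "'a::real_inner \<Rightarrow> 'a"
  assumes "\<forall>u v. inner (q u) v = - inner u (q v)"
  shows "inner (q y) y = 0"
  using assms[rule_format, of y y] by (simp add: inner_commute)

lemma cubic_form_zero_polarization:
  fixes B :: "'a::real_inner \<Rightarrow> 'a \<Rightarrow> 'a"
  assumes bl: "bilinear B" and sym: "\<And>x y. B x y = B y x"
    and cubic: "\<And>y. inner (B y y) y = 0"
  shows "inner (B y y) w + 2 * inner (B y w) y = 0"
proof -
  let ?A = "inner (B y y) w + 2 * inner (B y w) y"
    and ?C = "inner (B w w) y + 2 * inner (B y w) w"
  have expand: "inner (B (y + t *\<^sub>R w) (y + t *\<^sub>R w)) (y + t *\<^sub>R w)
      = inner (B y y) y + t * ?A + t\<^sup>2 * ?C + t ^ 3 * inner (B w w) w" for t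
    using sym[of w y]
    by (simp add: bilinear_ladd[OF bl] bilinear_radd[OF bl] bilinear_lmul[OF bl]
        bilinear_rmul[OF bl] inner_add_left inner_add_right power2_eq_square
        power3_eq_cube algebra_simps)
  show ?thesis
    using expand[of 1] expand[of "-1"] by (simp add: cubic)
qed

lemma adjoint_add:
  fixes f g :: "'a::euclidean_space \<Rightarrow> 'b::euclidean_space"
  assumes "linear f" "linear g"
  shows "adjoint (\<lambda>v. f v + g v) = (\<lambda>v. adjoint f v + adjoint g v)"
  by (rule adjoint_unique)
    (simp add: inner_add_left inner_add_right adjoint_clauses[OF assms(1)]
      adjoint_clauses[OF assms(2)])

lemma adjoint_scaleR:
  fixes f :: "'a::euclidean_space \<Rightarrow> 'b::euclidean_space"
  assumes "linear f"
  shows "adjoint (\<lambda>v. c *\<^sub>R f v) = (\<lambda>v. c *\<^sub>R adjoint f v)"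
  by (rule adjoint_unique) (simp add: adjoint_clauses[OF assms])

definition skew_part :: "('a::euclidean_space \<Rightarrow> 'a) \<Rightarrow> 'a \<Rightarrow> 'a" where
  "skew_part f v = (1/2) *\<^sub>R (f v - adjoint f v)"

lemma linear_skew_part:
  assumes "linear f"
  shows "linear (skew_part f)"
  unfolding skew_part_def
  by (intro linear_compose_scale_right linear_compose_sub assms adjoint_linear)

lemma skew_part_skew_adjoint:
  assumes "linear f"
  shows "inner (skew_part f u) v = - inner u (skew_part f v)"
  by (simp add: skew_part_def inner_diff_left inner_diff_right adjoint_clauses[OF assms]
      inner_commute[of u] algebra_simps)

lemma skew_part_add:
  assumes "linear f" "linear g"
  shows "skew_part (\<lambda>v. f v + g v) v = skew_part f v + skew_part g v"
  by (simp add: skew_part_def adjoint_add[OF assms] algebra_simps)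

lemma skew_part_scaleR:
  assumes "linear f"
  shows "skew_part (\<lambda>v. c *\<^sub>R f v) v = c *\<^sub>R skew_part f v"
  by (simp add: skew_part_def adjoint_scaleR[OF assms] algebra_simps)

lemma skew_part_diagonal:
  fixes B :: "'a::euclidean_space \<Rightarrow> 'a \<Rightarrow> 'a"
  assumes bl: "bilinear B" and sym: "\<And>x y. B x y = B y x"
    and cubic: "\<And>y. inner (B y y) y = 0"
  shows "skew_part (B y) y = (3/4) *\<^sub>R B y y"
proof -
  have lin: "linear (B y)"
    using bl by (simp add: bilinear_def)
  have adjoint_diagonal: "adjoint (B y) y = - (1/2) *\<^sub>R B y y"
  proof (rule vector_eq_rdot[THEN iffD1], intro allI)
    fix w
    have "inner (adjoint (B y) y) w = inner (B y w) y"
      by (simp add: adjoint_clauses[OF lin] inner_commute)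
    then show "inner (adjoint (B y) y) w = inner (- (1/2) *\<^sub>R B y y) w"
      using cubic_form_zero_polarization[OF bl sym cubic, of y w] by simp
  qed
  have "skew_part (B y) y = (1/2) *\<^sub>R (B y y + (1/2) *\<^sub>R B y y)"
    by (simp add: skew_part_def adjoint_diagonal)
  also have "\<dots> = (1/2 + 1/4) *\<^sub>R B y y"
    by (simp only: scaleR_add_right scaleR_add_left scaleR_scaleR) simp
  finally show ?thesis
    by simp
qed

theorem lemma6:
  fixes B :: "real^'n \<Rightarrow> real^'n \<Rightarrow> real^'n"
  assumes "bilinear B"
    and "\<forall>x y. B x y = B y x"
  shows "(\<forall>y. inner (B y y) y = 0) \<longleftrightarrow>
         (\<exists>S :: real^'n \<Rightarrow> real^'n \<Rightarrow> real^'n.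
             (\<forall>x y. S (x + y) = (\<lambda>v. S x v + S y v)) \<and>
             (\<forall>c x. S (c *\<^sub>R x) = (\<lambda>v. c *\<^sub>R S x v)) \<and>
             (\<forall>y. S y \<in> so_n) \<and> (\<forall>y. B y y = S y y))"
proof
  assume cubic: "\<forall>y. inner (B y y) y = 0"
  have lin: "linear (B y)" for y
    using assms(1) by (simp add: bilinear_def)
  define S where "S = (\<lambda>y v. (4/3) *\<^sub>R skew_part (B y) v)"
  show "\<exists>S. (\<forall>x y. S (x + y) = (\<lambda>v. S x v + S y v)) \<and>
            (\<forall>c x. S (c *\<^sub>R x) = (\<lambda>v. c *\<^sub>R S x v)) \<and>
            (\<forall>y. S y \<in> so_n) \<and> (\<forall>y. B y y = S y y)"
  proof (intro exI[of _ S] conjI allI)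
    fix x y
    have B_add: "B (x + y) = (\<lambda>v. B x v + B y v)"
      using assms(1) by (simp add: fun_eq_iff bilinear_ladd)
    show "S (x + y) = (\<lambda>v. S x v + S y v)"
      by (simp add: fun_eq_iff S_def B_add skew_part_add lin scaleR_add_right)
  next
    fix c x
    have B_scaleR: "B (c *\<^sub>R x) = (\<lambda>v. c *\<^sub>R B x v)"
      using assms(1) by (simp add: fun_eq_iff bilinear_lmul)
    show "S (c *\<^sub>R x) = (\<lambda>v. c *\<^sub>R S x v)"
      by (simp add: fun_eq_iff S_def B_scaleR skew_part_scaleR lin mult.commute)
  next
    fix y
    show "S y \<in> so_n"
      by (simp add: so_n_def S_def lin linear_compose_scale_right linear_skew_part
          skew_part_skew_adjoint)
    show "B y y = S y y"
      using assms cubic by (simp add: S_def skew_part_diagonal)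
  qed
next
  assume "\<exists>S :: real^'n \<Rightarrow> real^'n \<Rightarrow> real^'n.
             (\<forall>x y. S (x + y) = (\<lambda>v. S x v + S y v)) \<and>
             (\<forall>c x. S (c *\<^sub>R x) = (\<lambda>v. c *\<^sub>R S x v)) \<and>
             (\<forall>y. S y \<in> so_n) \<and> (\<forall>y. B y y = S y y)"
  then obtain S :: "real^'n \<Rightarrow> real^'n \<Rightarrow> real^'n"
    where "\<forall>y. S y \<in> so_n" and "\<forall>y. B y y = S y y"
    by blast
  then show "\<forall>y. inner (B y y) y = 0"
    unfolding so_n_def using skew_adjoint_inner_self by fastforce
qed

end
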